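(* In the model described in the context, if $\tau\ge 3f+1$, then Algorithm 1 with threshold $t=f+1$ satisfies both completeness and weak accuracy.
   Context: Model. An asynchronous system has client processes (writers, readers, auditors) and $n$ storage objects $o_1,\dots,o_n$. Each $o_k$ is a linearisable loggable read/write register with a log $L_k$ (initially empty). Its rw-write($b$) stores a block; rw-read() returns the current block (or $\perp$) and appends $\langle p_r,\mathit{label}(b)\rangle$ to $L_k$, where $p_r$ is the reader and $\mathit{label}(b)$ identifies the value from which $b$ was derived; rw-getLog() returns $L_k$. A multi-writer multi-reader register over values $\mathbb{V}$ is emulated by information dispersal. An a-write($v$) encodes $v$ into $b_{v_1},\dots,b_{v_n}$ with $b_{v_k}$ sent to $o_k$. Any $\tau$ distinct blocks of $v$ suffice to recover $v$, and fewer do not. Reads are fast (one round-trip), and concurrency is unlimited. Faults. Writers and auditors can only crash. Faulty readers may crash or contact a subset of objects. At most $f$ objects are faulty; a faulty object may crash, omit its block, omit log records from auditors, and report records of nonexistent reads. Providing set $P_{p_r,v}$: the set of objects that received a write of $b_{v_k}$ and responded $b_{v_k}$ to a read of $p_r$. The value $v$ is effectively read by $p_r$ iff $|P_{p_r,v}|\ge\tau$. Algorithm 1 (a-audit with threshold $t$): 1. Invoke rw-getLog on all $n$ objects in parallel, and wait for responses from at least $n-f$; let $L[k]$ be the log received from $o_k$. 2. For every record $\langle p_r,\mathit{label}(v)\rangle$ in some $L[k]$, let $\mathcal{E}_{p_r,v}=\{k:\langle p_r,\mathit{label}(v)\rangle\in L[k]\}$, and add it to $E_A$ iff $|\mathcal{E}_{p_r,v}|\ge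 t$. 3. Return $E_A$. Completeness: $|P_{p_r,v}|\ge\tau$ before the audit implies $\mathcal{E}_{p_r,v}\in E_A$. Weak accuracy: for every correct reader $p_r$ that never invoked an a-read before the audit, $\mathcal{E}_{p_r,v}\notin E_A$ for all $v$. *)

theory Defs
  imports Main
begin

(* Abstract snapshot of an execution of the emulation at the time of one a-audit.
   Objects are o_0 .. o_(n-1), indexed by {..<n}.
   Log records <p_r, label(v)> are represented as pairs (p_r, v) (label identifies v).

   F        : set of faulty objects
   R        : objects whose rw-getLog responses the auditor waited for (step 1)
   L k      : log returned by o_k to the auditor (k \<in> R)
   H k      : true content of L_k at the point where the auditor's rw-getLog
              on o_k is linearised (meaningful for correct objects)
   P p v    : providing set P_{p,v}: objects that received a write of b_{v_k} and
              responded b_{v_k} to a read of p, the response occurring before the audit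
   correct p: reader p is correct
   invoked p: reader p invoked an a-read before the end of the audit *)

definition model_ok ::
  "nat \<Rightarrow> nat \<Rightarrow> nat set \<Rightarrow> nat set \<Rightarrow> (nat \<Rightarrow> ('p \<times> 'v) set) \<Rightarrow>
   (nat \<Rightarrow> ('p \<times> 'v) set) \<Rightarrow> ('p \<Rightarrow> 'v \<Rightarrow> nat set) \<Rightarrow> ('p \<Rightarrow> bool) \<Rightarrow> ('p \<Rightarrow> bool) \<Rightarrow> bool"
where
  "model_ok n f F R L H P correct invoked \<longleftrightarrow>
     \<comment> \<open>at most f objects are faulty\<close>
     F \<subseteq> {..<n} \<and> card F \<le> f \<and>
     \<comment> \<open>the auditor waits for at least n - f rw-getLog responses\<close>
     R \<subseteq> {..<n} \<and> n - f \<le> card R \<and>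
     \<comment> \<open>correct objects return their (linearisable) log faithfully; faulty ones are arbitrary\<close>
     (\<forall>k \<in> R - F. L k = H k) \<and>
     (\<forall>p v. P p v \<subseteq> {..<n}) \<and>
     \<comment> \<open>a read completed at a correct object before the audit is recorded in its log\<close>
     (\<forall>p v k. k \<in> P p v - F \<longrightarrow> (p, v) \<in> H k) \<and>
     \<comment> \<open>correct objects record only reads that happened, and a correct reader issues
         rw-reads only inside a-reads\<close>
     (\<forall>p v k. k \<in> {..<n} - F \<longrightarrow> (p, v) \<in> H k \<longrightarrow> correct p \<longrightarrow> invoked p)"

definition evidence :: "nat set \<Rightarrow> (nat \<Rightarrow> ('p \<times> 'v) set) \<Rightarrow> 'p \<Rightarrow> 'v \<Rightarrow> nat set" where
  "evidence R L p v = {k \<in> R. (p, v) \<in> L k}"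

(* Algorithm 1 with threshold t: the returned set E_A, whose elements are the evidence
   sets E_{p,v}, tagged with the reader and value they refer to *)
definition a_audit :: "nat \<Rightarrow> nat set \<Rightarrow> (nat \<Rightarrow> ('p \<times> 'v) set) \<Rightarrow> ('p \<times> 'v \<times> nat set) set" where
  "a_audit t R L = {(p, v, E). (\<exists>k \<in> R. (p, v) \<in> L k) \<and> E = evidence R L p v \<and> t \<le> card E}"

end

theory Submission
  imports Defs
begin

text \<open>At most \<open>f\<close> objects miss the audit and at most \<open>f\<close> are faulty, so a providing set
  of size \<open>\<tau> \<ge> 3f + 1\<close> leaves at least \<open>f + 1\<close> correct responding objects, each of which
  faithfully reports the read: the evidence passes the threshold \<open>f + 1\<close>. Conversely an
  evidence set of size \<open>f + 1\<close> contains a correct object, and a correct object only logs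
  reads that a correct reader actually issued inside an a-read.\<close>

lemma card_le_card_Diff_plus_card_Int_Diff:
  assumes "finite U" "P \<subseteq> U" "R \<subseteq> U" "finite F"
  shows "card P \<le> card (U - R) + card (P \<inter> R - F) + card F"
proof -
  have "card P \<le> card (P - R) + card (P \<inter> R)"
    by (metis card_Un_le Un_Diff_Int)
  also have "card (P - R) \<le> card (U - R)"
    using assms by (intro card_mono) auto
  also have "card (P \<inter> R) \<le> card ((P \<inter> R - F) \<union> F)"
    using assms by (intro card_mono) (auto intro: finite_subset)
  also have "\<dots> \<le> card (P \<inter> R - F) + card F"
    by (rule card_Un_le)
  finally show ?thesis by linarith
qed

lemma card_le_card_evidence_plus_twice_faults:
  assumes "model_ok n f F R L H P correct invoked"
  shows "card (P p v) \<le> card (evidence R L p v) + 2 * f"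
proof -
  from assms have F: "F \<subseteq> {..<n}" "card F \<le> f" and R: "R \<subseteq> {..<n}" "n - f \<le> card R"
    and P: "P p v \<subseteq> {..<n}" and logged: "\<forall>k \<in> P p v - F. (p, v) \<in> H k"
    and faithful: "\<forall>k \<in> R - F. L k = H k"
    unfolding model_ok_def by auto
  have finR: "finite R" using R(1) finite_subset by blast
  have "P p v \<inter> R - F \<subseteq> evidence R L p v"
    using logged faithful unfolding evidence_def by auto
  then have "card (P p v \<inter> R - F) \<le> card (evidence R L p v)"
    using finR by (intro card_mono) (simp_all add: evidence_def)
  moreover have "card ({..<n} - R) = n - card R"
    using R(1) finR by (simp add: card_Diff_subset)
  moreover have "card (P p v) \<le> card ({..<n} - R) + card (P p v \<inter> R - F) + card F"
    using F(1) R(1) P by (intro card_le_card_Diff_plus_card_Int_Diff) (auto intro: finite_subset)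
  moreover have "card R \<le> n"
    using R(1) by (metis card_lessThan card_mono finite_lessThan)
  ultimately show ?thesis using F(2) R(2) by linarith
qed

lemma evidence_subset_faulty_if_never_invoked:
  assumes "model_ok n f F R L H P correct invoked" "correct p" "\<not> invoked p"
  shows "evidence R L p v \<subseteq> F"
proof
  fix k
  assume k: "k \<in> evidence R L p v"
  from assms(1) have "R \<subseteq> {..<n}" "\<forall>k \<in> R - F. L k = H k"
    and "\<forall>k \<in> {..<n} - F. (p, v) \<in> H k \<longrightarrow> correct p \<longrightarrow> invoked p"
    unfolding model_ok_def by auto
  with k assms(2,3) show "k \<in> F"
    unfolding evidence_def by auto
qed

lemma evidence_in_a_audit:
  assumes "0 < t" "t \<le> card (evidence R L p v)"
  shows "(p, v, evidence R L p v) \<in> a_audit t R L"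
proof -
  from assms have "evidence R L p v \<noteq> {}" by auto
  with assms(2) show ?thesis unfolding a_audit_def evidence_def by auto
qed

lemma a_audit_memD:
  "(p, v, E) \<in> a_audit t R L \<Longrightarrow> E = evidence R L p v \<and> t \<le> card E"
  unfolding a_audit_def by auto

theorem theorem3:
  fixes n f \<tau> :: nat and F R :: "nat set"
    and L H :: "nat \<Rightarrow> ('p \<times> 'v) set" and P :: "'p \<Rightarrow> 'v \<Rightarrow> nat set"
    and correct invoked :: "'p \<Rightarrow> bool"
  assumes "model_ok n f F R L H P correct invoked"
    and "\<tau> \<ge> 3 * f + 1"
  shows "(\<forall>p v. \<tau> \<le> card (P p v) \<longrightarrow> (p, v, evidence R L p v) \<in> a_audit (f + 1) R L)
       \<and> (\<forall>p. correct p \<and> \<not> invoked p \<longrightarrow> (\<forall>v E. (p, v, E) \<notin> a_audit (f + 1) R L))"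
proof (intro conjI allI impI)
  fix p v
  assume "\<tau> \<le> card (P p v)"
  with assms(2) card_le_card_evidence_plus_twice_faults[OF assms(1), of p v]
  have "f + 1 \<le> card (evidence R L p v)" by linarith
  then show "(p, v, evidence R L p v) \<in> a_audit (f + 1) R L"
    by (intro evidence_in_a_audit) simp_all
next
  fix p v E
  assume "correct p \<and> \<not> invoked p"
  then have "evidence R L p v \<subseteq> F"
    using evidence_subset_faulty_if_never_invoked[OF assms(1)] by blast
  moreover from assms(1) have "finite F" "card F \<le> f"
    unfolding model_ok_def by (auto intro: finite_subset)
  ultimately have "card (evidence R L p v) \<le> f"
    using card_mono[of F "evidence R L p v"] by linarith
  then show "(p, v, E) \<notin> a_audit (f + 1) R L"
    using a_audit_memD by fastforce
qed

end
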